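(* Let $D$ be a reduced knot diagram, let $2\le k\le\infty$, and let $\boldsymbol\ell$ be a null pattern of the game matrix $M$ of some version of the $k$-color region select game on $D$. Let $s=\sigma_{\boldsymbol\ell}(e)$ for some edge $e$ of $D$. Fix a checkerboard shading of $D$, and let $r_1,r_2$ be two regions that are both shaded or both unshaded. Then there is an integer $i$ with $|2i|\le d(r_1,r_2)$ such that $\boldsymbol\ell(r_1)=\boldsymbol\ell(r_2)+2is$ in $\mathbb{Z}_k$.
   Context: Diagrams: a link (knot) diagram $D$ is the underlying graph of a regular projection of a link (knot) into $S^2$. Its vertices are the crossings, each of valence 4, and over/under information is ignored. Components without crossings are closed loops, each regarded as one edge with no vertices. Regions of $D$ are the connected components of $S^2\setminus D$. A vertex or edge is incident to a region if it lies in the boundary of that region. Two regions are adjacent if they are incident to a common edge. A vertex $v$ is reducible if some circle in $S^2$ meets $D$ transversely only at $v$, and irreducible otherwise. An irreducible vertex is incident to four distinct regions. A reducible vertex $v$ is incident to exactly three regions $r_0,r_1,r_2$, where $r_0$ touches $v$ from two sides and $r_1,r_2$ touch it from one side. A knot diagram with $n$ vertices has $n+2$ regions. A knot diagram is reduced if all its vertices are irreducible. Ring: for an integer $k\ge2$ let $\mathbb{Z}_k=\mathbb{Z}/k\mathbb{Z}$, and for $k=\infty$ let $\mathbb{Z}_\infty=\mathbb{Z}$. Game versions: a version of the $k$-color region select game on $D$ is a choice of an increment number $a(v,r)\in\mathbb{Z}_k$ for every incident vertex–region pair, subject to the following rules. - If $k<\infty$ and $v$ is irreducible, then $a(v,r)=a_v$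 is the same for all regions $r$ incident to $v$, and $a_v$ is not a zero divisor of $\mathbb{Z}_k$. - If $k<\infty$ and $v$ is reducible, then $a(v,r_0)$ is arbitrary, while $a(v,r_1)$ and $a(v,r_2)$ are not zero divisors. - If $k=\infty$, then $a(v,r)=1$, except that $a(v,r_0)\in\mathbb{Z}$ is arbitrary when $v$ is reducible. - The original game is the version in which all increment numbers equal $1$. Game matrix: enumerate the vertices as $v_1,\dots,v_n$ and the regions as $r_1,\dots,r_m$. The game matrix is the $n\times m$ matrix $M$ over $\mathbb{Z}_k$ with $M_{ij}=a(v_i,r_j)$ if $v_i$ is incident to $r_j$, and $M_{ij}=0$ otherwise. Patterns and configurations: a push pattern is a vector $\mathbf p\in\mathbb{Z}_k^m$, and $\mathbf p(r_j)=p_j$ is the number of times $r_j$ is pushed. A region $r$ is not pushed in $\mathbf p$ if $\mathbf p(r)=0$. A color configuration is a vector $\mathbf c\in\mathbb{Z}_k^n$. Applying $\mathbf p$ to $\mathbf c$ yields $\mathbf c+M\mathbf p$. The configuration $\mathbf c$ is solvable if some $\mathbf p$ satisfies $M\mathbf p=-\mathbf c$; such a $\mathbf p$ is a solving pattern for $\mathbf c$. $D$ is always solvable in the version if every $\mathbf c\in\mathbb{Z}_k^n$ is solvable. A null pattern is an element of $Ker_k(M)=\{\mathbf p\in\mathbb{Z}_k^m: M\mathbf p=0\}$. Push number: for a push pattern $\mathbf p$ and an edge $e$ incident to regions $r,r'$, the push number of $e$ is $\sigma_{\mathbf p}(e)=\mathbf p(r)+\mathbf p(r')\in\mathbb{Z}_k$.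 Checkerboard shading: a checkerboard shading of $D$ is a shading of some of its regions such that, of any two adjacent regions, exactly one is shaded. Distance: the dual graph of $D$ has one vertex per region, with an edge between the vertices of each pair of adjacent regions. The distance $d(r_1,r_2)$ is the graph distance between the corresponding vertices of the dual graph. *)

theory Defs
  imports Main "HOL-Library.Extended_Nat" "HOL-Number_Theory.Cong"
begin

text \<open>Combinatorial-map encoding of a link diagram on S^2.
  Darts (half-edges) form a finite set H. The vertex rotation sig permutes the four
  darts at each crossing cyclically; the edge involution alp swaps the two darts of an edge.\<close>

definition orb :: "('a \<Rightarrow> 'a) \<Rightarrow> 'a \<Rightarrow> 'a set" where
  "orb f d = {(f ^^ n) d | n. True}"

definition vertices :: "'a set \<Rightarrow> ('a \<Rightarrow> 'a) \<Rightarrow> 'a set set" where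
  "vertices H sig = {orb sig d | d. d \<in> H}"

definition edges :: "'a set \<Rightarrow> ('a \<Rightarrow> 'a) \<Rightarrow> 'a set set" where
  "edges H alp = {{d, alp d} | d. d \<in> H}"

definition face :: "('a \<Rightarrow> 'a) \<Rightarrow> ('a \<Rightarrow> 'a) \<Rightarrow> 'a \<Rightarrow> 'a set" where
  "face sig alp d = orb (sig \<circ> alp) d"

definition regions :: "'a set \<Rightarrow> ('a \<Rightarrow> 'a) \<Rightarrow> ('a \<Rightarrow> 'a) \<Rightarrow> 'a set set" where
  "regions H sig alp = {face sig alp d | d. d \<in> H}"

text \<open>Straight-ahead continuation: from dart d go along its edge to alp d and
  continue to the opposite dart at the next crossing.\<close>
definition straight :: "('a \<Rightarrow> 'a) \<Rightarrow> ('a \<Rightarrow> 'a) \<Rightarrow> 'a \<Rightarrow> 'a" where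
  "straight sig alp = (sig ^^ 2) \<circ> alp"

text \<open>A knot diagram (with at least one crossing): a 4-regular map of Euler characteristic 2
  (i.e. a cellularly embedded graph in S^2) whose straight-ahead walk has a single
  (undirected) component.\<close>
definition knot_diagram :: "'a set \<Rightarrow> ('a \<Rightarrow> 'a) \<Rightarrow> ('a \<Rightarrow> 'a) \<Rightarrow> bool" where
  "knot_diagram H sig alp \<longleftrightarrow>
     finite H \<and> H \<noteq> {} \<and>
     bij_betw sig H H \<and> bij_betw alp H H \<and>
     (\<forall>d\<in>H. alp d \<noteq> d \<and> alp (alp d) = d) \<and>
     (\<forall>d\<in>H. (sig ^^ 4) d = d \<and> sig d \<noteq> d \<and> (sig ^^ 2) d \<noteq> d) \<and>
     int (card (vertices H sig)) - int (card (edges H alp)) + int (card (regions H sig alp)) = 2 \<and>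
     (\<forall>d\<in>H. \<forall>d'\<in>H. \<exists>n. (straight sig alp ^^ n) d = d' \<or> (straight sig alp ^^ n) (alp d) = d')"

definition incident :: "'a set \<Rightarrow> 'a set \<Rightarrow> bool" where
  "incident x r \<longleftrightarrow> x \<inter> r \<noteq> {}"

definition adjacent :: "'a set \<Rightarrow> ('a \<Rightarrow> 'a) \<Rightarrow> ('a \<Rightarrow> 'a) \<Rightarrow> 'a set \<Rightarrow> 'a set \<Rightarrow> bool" where
  "adjacent H sig alp r r' \<longleftrightarrow> r \<in> regions H sig alp \<and> r' \<in> regions H sig alp \<and>
     (\<exists>e\<in>edges H alp. incident e r \<and> incident e r')"

text \<open>A vertex is reducible iff some region touches it at two (or more) of its four corners
  (the corner following dart d at its vertex lies in the region face d).\<close>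
definition reducible :: "'a set \<Rightarrow> ('a \<Rightarrow> 'a) \<Rightarrow> ('a \<Rightarrow> 'a) \<Rightarrow> 'a set \<Rightarrow> bool" where
  "reducible H sig alp v \<longleftrightarrow> (\<exists>r\<in>regions H sig alp. card (v \<inter> r) \<ge> 2)"

definition reduced :: "'a set \<Rightarrow> ('a \<Rightarrow> 'a) \<Rightarrow> ('a \<Rightarrow> 'a) \<Rightarrow> bool" where
  "reduced H sig alp \<longleftrightarrow> (\<forall>v\<in>vertices H sig. \<not> reducible H sig alp v)"

text \<open>Z_k is represented by int modulo zmod k; k = \<infinity> gives modulus 0, i.e. Z itself.\<close>
definition zmod :: "enat \<Rightarrow> int" where
  "zmod k = (case k of enat n \<Rightarrow> int n | \<infinity> \<Rightarrow> 0)"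

definition non_zero_divisor :: "nat \<Rightarrow> int \<Rightarrow> bool" where
  "non_zero_divisor n c \<longleftrightarrow> (\<forall>b::int. [c * b = 0] (mod int n) \<longrightarrow> [b = 0] (mod int n))"

definition game_version :: "'a set \<Rightarrow> ('a \<Rightarrow> 'a) \<Rightarrow> ('a \<Rightarrow> 'a) \<Rightarrow> enat \<Rightarrow> ('a set \<Rightarrow> 'a set \<Rightarrow> int) \<Rightarrow> bool" where
  "game_version H sig alp k a \<longleftrightarrow>
     (\<forall>v\<in>vertices H sig.
       (case k of
          enat n \<Rightarrow>
            (\<not> reducible H sig alp v \<longrightarrow>
               (\<exists>c. non_zero_divisor n c \<and>
                  (\<forall>r\<in>regions H sig alp. incident v r \<longrightarrow> [a v r = c] (mod int n)))) \<and>
            (reducible H sig alp v \<longrightarrow>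
               (\<forall>r\<in>regions H sig alp. incident v r \<and> card (v \<inter> r) = 1 \<longrightarrow> non_zero_divisor n (a v r)))
        | \<infinity> \<Rightarrow>
            (\<forall>r\<in>regions H sig alp. incident v r \<longrightarrow>
               (\<not> reducible H sig alp v \<or> card (v \<inter> r) = 1) \<longrightarrow> a v r = 1)))"

definition game_matrix :: "('a set \<Rightarrow> 'a set \<Rightarrow> int) \<Rightarrow> 'a set \<Rightarrow> 'a set \<Rightarrow> int" where
  "game_matrix a v r = (if incident v r then a v r else 0)"

definition null_pattern :: "'a set \<Rightarrow> ('a \<Rightarrow> 'a) \<Rightarrow> ('a \<Rightarrow> 'a) \<Rightarrow> enat \<Rightarrow> ('a set \<Rightarrow> 'a set \<Rightarrow> int) \<Rightarrow> ('a set \<Rightarrow> int) \<Rightarrow> bool" where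
  "null_pattern H sig alp k a l \<longleftrightarrow>
     (\<forall>v\<in>vertices H sig. [(\<Sum>r\<in>regions H sig alp. game_matrix a v r * l r) = 0] (mod zmod k))"

definition push_number :: "('a \<Rightarrow> 'a) \<Rightarrow> ('a \<Rightarrow> 'a) \<Rightarrow> ('a set \<Rightarrow> int) \<Rightarrow> 'a set \<Rightarrow> int" where
  "push_number sig alp l e = (let d = (SOME d. d \<in> e) in l (face sig alp d) + l (face sig alp (alp d)))"

definition checkerboard :: "'a set \<Rightarrow> ('a \<Rightarrow> 'a) \<Rightarrow> ('a \<Rightarrow> 'a) \<Rightarrow> 'a set set \<Rightarrow> bool" where
  "checkerboard H sig alp S \<longleftrightarrow> S \<subseteq> regions H sig alp \<and>
     (\<forall>r r'. adjacent H sig alp r r' \<and> r \<noteq> r' \<longrightarrow> (r \<in> S \<longleftrightarrow> r' \<notin> S))"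

definition dual_dist :: "'a set \<Rightarrow> ('a \<Rightarrow> 'a) \<Rightarrow> ('a \<Rightarrow> 'a) \<Rightarrow> 'a set \<Rightarrow> 'a set \<Rightarrow> nat" where
  "dual_dist H sig alp r r' = (LEAST n. (r, r') \<in> {(x, y). adjacent H sig alp x y} ^^ n)"

end

theory Submission
  imports Defs
begin

text \<open>In a reduced diagram the four corners of a crossing lie in four distinct regions, all
  carrying the same non-zero-divisor increment, so a null pattern sums to zero around every
  crossing. The push numbers of two consecutive edges along the knot are the two halves of such
  a sum, hence negatives of each other; since the knot is a single closed curve, every push
  number is \<open>\<pm>s\<close>. Crossing an edge from a region \<open>q\<close> to a region \<open>r\<close> gives
  \<open>\<ell>(q) = -\<ell>(r) \<pm> s\<close>, so along a shortest dual path \<open>\<ell>(r\<^sub>1) = \<pm>\<ell>(r\<^sub>2) + j s\<close> with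
  \<open>|j| \<le> d(r\<^sub>1, r\<^sub>2)\<close>, where the sign and the parity of \<open>j\<close> flip exactly when the colour changes.\<close>

lemma bij_betw_funpow_mem: "bij_betw f H H \<Longrightarrow> z \<in> H \<Longrightarrow> (f ^^ n) z \<in> H"
  by (meson bij_betwE bij_betw_funpow)

lemma bij_betw_funpow_periodic:
  assumes "finite H" "bij_betw f H H" "z \<in> H"
  obtains p where "p > 0" "(f ^^ p) z = z"
proof -
  let ?g = "\<lambda>n. (f ^^ n) z"
  have "range ?g \<subseteq> H" using bij_betw_funpow_mem[OF assms(2,3)] by blast
  then have "\<not> inj ?g"
    using assms(1) finite_subset finite_imageD infinite_UNIV_nat by blast
  then obtain i j where ij: "i < j" "?g i = ?g j"
    unfolding inj_def by (metis linorder_neqE_nat)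
  moreover have "i + (j - i) = j" using ij(1) by simp
  ultimately have "(f ^^ i) ((f ^^ (j - i)) z) = (f ^^ i) z"
    by (metis comp_apply funpow_add)
  moreover have "inj_on (f ^^ i) H"
    using bij_betw_funpow[OF assms(2)] by (rule bij_betw_imp_inj_on)
  ultimately have "(f ^^ (j - i)) z = z"
    using assms(2,3) bij_betw_funpow_mem by (metis inj_onD)
  with ij(1) show thesis by (intro that[of "j - i"]) simp_all
qed

lemma orb_subset_orb: "y \<in> orb f z \<Longrightarrow> orb f y \<subseteq> orb f z"
  unfolding orb_def by (auto simp flip: comp_apply[of "f ^^ _" "f ^^ _"] funpow_add)

lemma orb_eq_if_mem:
  assumes "finite H" "bij_betw f H H" "z \<in> H" "y \<in> orb f z"
  shows "orb f y = orb f z"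
proof
  show "orb f y \<subseteq> orb f z" using assms(4) by (rule orb_subset_orb)
  obtain n where y: "y = (f ^^ n) z" using assms(4) unfolding orb_def by blast
  obtain p where p: "p > 0" "(f ^^ p) z = z"
    using bij_betw_funpow_periodic[OF assms(1-3)] by blast
  have "((f ^^ p) ^^ n) z = z" using p(2) by (induction n) auto
  moreover have "p * n - n + n = p * n" using p(1) by simp
  ultimately have "(f ^^ (p * n - n)) y = z"
    unfolding y by (metis comp_apply funpow_add funpow_mult)
  then have "z \<in> orb f y" unfolding orb_def by blast
  then show "orb f z \<subseteq> orb f y" by (rule orb_subset_orb)
qed

lemma orb_period4:
  assumes "(f ^^ 4) d = d"
  shows "orb f d = {d, f d, f (f d), f (f (f d))}"
proof
  have "f (f (f (f d))) = d" using assms by (simp add: numeral_eq_Suc)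
  then have "(f ^^ n) d \<in> {d, f d, f (f d), f (f (f d))}" for n
    by (induction n) auto
  then show "orb f d \<subseteq> {d, f d, f (f d), f (f (f d))}" unfolding orb_def by blast
  have "(f ^^ n) d \<in> orb f d" for n unfolding orb_def by blast
  from this[of 0] this[of 1] this[of 2] this[of 3]
  show "{d, f d, f (f d), f (f (f d))} \<subseteq> orb f d" by (simp add: numeral_eq_Suc)
qed

lemma irreducible_vertex_increment:
  assumes "game_version H sig alp k a" "v \<in> vertices H sig" "\<not> reducible H sig alp v"
  obtains c where "\<And>b. [c * b = 0] (mod zmod k) \<Longrightarrow> [b = 0] (mod zmod k)"
    and "\<And>r. r \<in> regions H sig alp \<Longrightarrow> incident v r \<Longrightarrow> [a v r = c] (mod zmod k)"
proof (cases k)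
  case (enat n)
  with assms obtain c where "non_zero_divisor n c"
    and "\<forall>r\<in>regions H sig alp. incident v r \<longrightarrow> [a v r = c] (mod int n)"
    unfolding game_version_def by force
  with enat show thesis using that[of c] unfolding non_zero_divisor_def zmod_def by simp
next
  case infinity
  with assms have "\<And>r. r \<in> regions H sig alp \<Longrightarrow> incident v r \<Longrightarrow> a v r = 1"
    unfolding game_version_def by auto
  with infinity show thesis using that[of 1] by simp
qed

locale knot_map =
  fixes H :: "'a set" and sig alp :: "'a \<Rightarrow> 'a"
  assumes knot: "knot_diagram H sig alp"
begin

abbreviation F :: "'a \<Rightarrow> 'a set" where "F \<equiv> face sig alp"

lemma finite_darts: "finite H"
  and bij_sig: "bij_betw sig H H"
  and bij_alp: "bij_betw alp H H"
  and alp_alp: "x \<in> H \<Longrightarrow> alp (alp x) = x"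
  and straight_connected:
    "x \<in> H \<Longrightarrow> y \<in> H \<Longrightarrow> \<exists>n. (straight sig alp ^^ n) x = y \<or> (straight sig alp ^^ n) (alp x) = y"
  using knot unfolding knot_diagram_def by blast+

lemma sig_mem: "x \<in> H \<Longrightarrow> sig x \<in> H"
  using bij_sig bij_betwE by blast

lemma alp_mem: "x \<in> H \<Longrightarrow> alp x \<in> H"
  using bij_alp bij_betwE by blast

lemma sig_period: "x \<in> H \<Longrightarrow> (sig ^^ 4) x = x"
  and sig_neq: "x \<in> H \<Longrightarrow> sig x \<noteq> x"
  and sig_sig_neq: "x \<in> H \<Longrightarrow> sig (sig x) \<noteq> x"
  using knot unfolding knot_diagram_def by (auto simp: numeral_eq_Suc)

lemma vertex_darts:
  assumes "x \<in> H"
  shows "orb sig x = {x, sig x, sig (sig x), sig (sig (sig x))}"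
    and "distinct [x, sig x, sig (sig x), sig (sig (sig x))]"
proof -
  show "orb sig x = {x, sig x, sig (sig x), sig (sig (sig x))}"
    using sig_period[OF assms] by (rule orb_period4)
  have "sig (sig (sig x)) \<noteq> x"
    using sig_period[OF assms] sig_neq[OF assms] by (auto simp: numeral_eq_Suc)
  then show "distinct [x, sig x, sig (sig x), sig (sig (sig x))]"
    using assms sig_mem sig_neq sig_sig_neq by (simp, metis)
qed

lemma bij_face_step: "bij_betw (sig \<circ> alp) H H"
  using bij_alp bij_sig by (rule bij_betw_trans)

lemma face_self: "x \<in> F x"
  unfolding face_def orb_def by (auto intro!: exI[of _ 0])

lemma face_sig_alp_mem: "sig (alp x) \<in> F x"
  unfolding face_def orb_def by (auto intro!: exI[of _ 1])

lemma face_eq_if_mem: "z \<in> H \<Longrightarrow> y \<in> F z \<Longrightarrow> F y = F z"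
  unfolding face_def using orb_eq_if_mem[OF finite_darts bij_face_step] .

lemma face_sig_alp: "x \<in> H \<Longrightarrow> F (sig (alp x)) = F x"
  using face_eq_if_mem face_sig_alp_mem by blast

lemma face_alp: "x \<in> H \<Longrightarrow> F (alp x) = F (sig x)"
  using face_sig_alp[OF alp_mem] alp_alp by simp

lemma regions_eq: "regions H sig alp = F ` H"
  unfolding regions_def by blast

lemma region_eq_face: "r \<in> regions H sig alp \<Longrightarrow> y \<in> r \<Longrightarrow> F y = r"
  unfolding regions_eq using face_eq_if_mem by blast

lemma vertex_subset: "x \<in> H \<Longrightarrow> orb sig x \<subseteq> H"
  using vertex_darts(1) sig_mem by simp

lemma incident_regions_vertex:
  assumes "x \<in> H"
  shows "{r \<in> regions H sig alp. incident (orb sig x) r} = F ` orb sig x"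
proof
  show "{r \<in> regions H sig alp. incident (orb sig x) r} \<subseteq> F ` orb sig x"
    unfolding incident_def using region_eq_face by blast
  show "F ` orb sig x \<subseteq> {r \<in> regions H sig alp. incident (orb sig x) r}"
    unfolding incident_def regions_eq using vertex_subset[OF assms] face_self by blast
qed

lemma adjacent_faces_of_edge:
  assumes "adjacent H sig alp r r'" "r \<noteq> r'"
  obtains x where "x \<in> H" "r = F x" "r' = F (alp x)"
proof -
  obtain y where y: "y \<in> H" "incident {y, alp y} r" "incident {y, alp y} r'"
    and rr': "r \<in> regions H sig alp" "r' \<in> regions H sig alp"
    using assms(1) unfolding adjacent_def edges_def by blast
  have "r \<in> {F y, F (alp y)}" "r' \<in> {F y, F (alp y)}"
    using y(2,3) rr' region_eq_face unfolding incident_def by blast+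
  then consider "r = F y" "r' = F (alp y)" | "r = F (alp y)" "r' = F y"
    using assms(2) by blast
  then show thesis
  proof cases
    case 1
    then show thesis using that y(1) by blast
  next
    case 2
    then show thesis using that[of "alp y"] y(1) alp_mem alp_alp by simp
  qed
qed

lemma adjacent_face_alp:
  assumes "x \<in> H"
  shows "adjacent H sig alp (F x) (F (alp x))"
proof -
  have "{x, alp x} \<in> edges H alp" unfolding edges_def using assms by blast
  moreover have "incident {x, alp x} (F x)" "incident {x, alp x} (F (alp x))"
    unfolding incident_def using face_self by blast+
  ultimately show ?thesis
    unfolding adjacent_def regions_eq using assms alp_mem by blast
qed

lemma straight_eq: "straight sig alp x = sig (sig (alp x))"
  unfolding straight_def by (simp add: numeral_eq_Suc)

lemma straight_mem: "x \<in> H \<Longrightarrow> straight sig alp x \<in> H"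
  unfolding straight_eq using sig_mem alp_mem by blast

lemma adjacent_face_straight:
  assumes "x \<in> H"
  shows "adjacent H sig alp (F x) (F (straight sig alp x))"
proof -
  let ?y = "sig (alp x)"
  have "?y \<in> H" using assms sig_mem alp_mem by blast
  then have "F (straight sig alp x) = F (alp ?y)" by (simp add: face_alp straight_eq)
  then show ?thesis
    using adjacent_face_alp[OF \<open>?y \<in> H\<close>] face_sig_alp[OF assms] by simp
qed

abbreviation dual_edges :: "('a set \<times> 'a set) set" where
  "dual_edges \<equiv> {(r, r'). adjacent H sig alp r r'}"

lemma straight_iter_mem: "x \<in> H \<Longrightarrow> (straight sig alp ^^ n) x \<in> H"
  by (induction n) (simp_all add: straight_mem)

lemma dual_path_straight_iter:
  "x \<in> H \<Longrightarrow> (F x, F ((straight sig alp ^^ n) x)) \<in> dual_edges\<^sup>*"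
proof (induction n)
  case (Suc n)
  then show ?case
    using adjacent_face_straight[OF straight_iter_mem[OF Suc.prems]]
    by (simp add: rtrancl_into_rtrancl)
qed simp

lemma regions_dual_connected:
  assumes "r \<in> regions H sig alp" "r' \<in> regions H sig alp"
  shows "(r, r') \<in> dual_edges\<^sup>*"
proof -
  obtain x y where xy: "x \<in> H" "y \<in> H" "r = F x" "r' = F y"
    using assms unfolding regions_eq by blast
  then obtain n where "(straight sig alp ^^ n) x = y \<or> (straight sig alp ^^ n) (alp x) = y"
    using straight_connected by blast
  then show ?thesis
  proof
    assume "(straight sig alp ^^ n) x = y"
    then show ?thesis using dual_path_straight_iter[OF xy(1), of n] xy by simp
  next
    assume "(straight sig alp ^^ n) (alp x) = y"
    moreover have "(F x, F (alp x)) \<in> dual_edges" using adjacent_face_alp[OF xy(1)] by simp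
    ultimately show ?thesis
      using dual_path_straight_iter[OF alp_mem[OF xy(1)], of n] xy
      by (simp add: converse_rtrancl_into_rtrancl)
  qed
qed

lemma sum_vertex:
  assumes "x \<in> H"
  shows "(\<Sum>y\<in>orb sig x. g y) = g x + g (sig x) + g (sig (sig x)) + g (sig (sig (sig x)))"
  using vertex_darts[OF assms] by (simp add: add.assoc)

lemma reduced_corner_faces_inj:
  assumes "reduced H sig alp" "x \<in> H"
  shows "inj_on F (orb sig x)"
proof (rule inj_onI, rule ccontr)
  fix y z assume yz: "y \<in> orb sig x" "z \<in> orb sig x" "F y = F z" "y \<noteq> z"
  have "finite (orb sig x)" by (simp add: vertex_darts(1)[OF assms(2)])
  moreover have "{y, z} \<subseteq> orb sig x \<inter> F y" using yz face_self by auto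
  ultimately have "card (orb sig x \<inter> F y) \<ge> 2"
    using yz(4) card_mono[of "orb sig x \<inter> F y" "{y, z}"] by simp
  moreover have "F y \<in> regions H sig alp"
    using yz(1) vertex_subset[OF assms(2)] unfolding regions_eq by blast
  moreover have "orb sig x \<in> vertices H sig" unfolding vertices_def using assms(2) by blast
  ultimately show False using assms(1) unfolding reduced_def reducible_def by blast
qed

lemma null_pattern_vertex_sum:
  assumes "reduced H sig alp" "game_version H sig alp k a" "null_pattern H sig alp k a l"
    and "x \<in> H"
  shows "[(\<Sum>y\<in>orb sig x. l (F y)) = 0] (mod zmod k)"
proof -
  let ?v = "orb sig x"
  have v: "?v \<in> vertices H sig" unfolding vertices_def using assms(4) by blast
  then have "\<not> reducible H sig alp ?v" using assms(1) unfolding reduced_def by blast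
  then obtain c where c: "\<And>b. [c * b = 0] (mod zmod k) \<Longrightarrow> [b = 0] (mod zmod k)"
    and a: "\<And>r. r \<in> regions H sig alp \<Longrightarrow> incident ?v r \<Longrightarrow> [a ?v r = c] (mod zmod k)"
    using irreducible_vertex_increment[OF assms(2) v] by blast
  have incident: "{r \<in> regions H sig alp. incident ?v r} = F ` ?v"
    using incident_regions_vertex[OF assms(4)] .
  have "(\<Sum>r\<in>regions H sig alp. game_matrix a ?v r * l r) = (\<Sum>r\<in>F ` ?v. a ?v r * l r)"
    using finite_darts incident
    by (intro sum.mono_neutral_cong_right) (auto simp: regions_eq game_matrix_def)
  also have "\<dots> = (\<Sum>y\<in>?v. a ?v (F y) * l (F y))"
    using sum.reindex[OF reduced_corner_faces_inj[OF assms(1,4)]] by simp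
  also have "[\<dots> = (\<Sum>y\<in>?v. c * l (F y))] (mod zmod k)"
    using incident a by (intro cong_sum cong_mult cong_refl) blast
  finally have "[c * (\<Sum>y\<in>?v. l (F y)) = 0] (mod zmod k)"
    using assms(3) v unfolding null_pattern_def sum_distrib_left
    by (meson cong_sym cong_trans)
  then show ?thesis by (rule c)
qed

end

locale vanishing_vertex_sums = knot_map +
  fixes m :: int and l :: "'a set \<Rightarrow> int"
  assumes vertex_sum: "x \<in> H \<Longrightarrow> [(\<Sum>y\<in>orb sig x. l (F y)) = 0] (mod m)"
begin

definition dart_push :: "'a \<Rightarrow> int" where
  "dart_push x = l (F x) + l (F (alp x))"

lemma dart_push_alp: "x \<in> H \<Longrightarrow> dart_push (alp x) = dart_push x"
  unfolding dart_push_def by (simp add: alp_alp)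

lemma push_number_edge:
  assumes "x \<in> H"
  shows "push_number sig alp l {x, alp x} = dart_push x"
proof -
  have "(SOME d. d \<in> {x, alp x}) \<in> {x, alp x}" by (rule someI[of _ x]) simp
  then show ?thesis
    unfolding push_number_def Let_def dart_push_def[symmetric]
    using dart_push_alp[OF assms] by auto
qed

lemma dart_push_straight:
  assumes "x \<in> H"
  shows "[dart_push (straight sig alp x) = - dart_push x] (mod m)"
proof -
  let ?w = "alp x"
  have w: "?w \<in> H" using alp_mem[OF assms] .
  have "dart_push (straight sig alp x) + dart_push x
      = l (F ?w) + l (F (sig ?w)) + l (F (sig (sig ?w))) + l (F (sig (sig (sig ?w))))"
    unfolding dart_push_def straight_eq
    using face_alp[OF sig_mem[OF sig_mem[OF w]]] face_sig_alp[OF assms] by simp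
  then have "[dart_push (straight sig alp x) + dart_push x = 0] (mod m)"
    using vertex_sum[OF w] by (simp add: sum_vertex[OF w])
  then show ?thesis by (simp add: cong_iff_dvd_diff cong_0_iff)
qed

lemma dart_push_straight_iter:
  "x \<in> H \<Longrightarrow> [dart_push ((straight sig alp ^^ n) x) = (-1) ^ n * dart_push x] (mod m)"
proof (induction n)
  case (Suc n)
  then have "[- dart_push ((straight sig alp ^^ n) x) = - ((-1) ^ n * dart_push x)] (mod m)"
    by (simp add: cong_minus_minus_iff)
  then show ?case
    using dart_push_straight[OF straight_iter_mem[OF Suc.prems, of n]]
    by (auto elim: cong_trans)
qed simp

lemma dart_push_sign:
  assumes "x \<in> H" "y \<in> H"
  obtains \<epsilon> :: int where "\<epsilon> = 1 \<or> \<epsilon> = -1" "[dart_push y = \<epsilon> * dart_push x] (mod m)"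
proof -
  obtain n where "(straight sig alp ^^ n) x = y \<or> (straight sig alp ^^ n) (alp x) = y"
    using straight_connected[OF assms] by blast
  then have "[dart_push y = (-1) ^ n * dart_push x] (mod m)"
    using dart_push_straight_iter[OF assms(1)] dart_push_straight_iter[OF alp_mem[OF assms(1)]]
      dart_push_alp[OF assms(1)] by auto
  moreover have "(-1::int) ^ n = 1 \<or> (-1::int) ^ n = -1" by (cases "even n") auto
  ultimately show thesis using that by blast
qed

lemma adjacent_pattern_sum:
  assumes "adjacent H sig alp r r'" "r \<noteq> r'"
  obtains x where "x \<in> H" "l r + l r' = dart_push x"
  using adjacent_faces_of_edge[OF assms] unfolding dart_push_def by metis

lemma pattern_along_dual_path:
  assumes "checkerboard H sig alp S" "x\<^sub>0 \<in> H" "(r\<^sub>0, r) \<in> dual_edges ^^ n"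
  shows "\<exists>j::int. \<bar>j\<bar> \<le> int n \<and> (even j \<longleftrightarrow> (r\<^sub>0 \<in> S \<longleftrightarrow> r \<in> S)) \<and>
    [l r\<^sub>0 = (if even j then 1 else -1) * l r + j * dart_push x\<^sub>0] (mod m)"
  using assms(3)
proof (induction n arbitrary: r)
  case 0
  then show ?case by (intro exI[of _ 0]) simp
next
  case (Suc n)
  let ?s = "dart_push x\<^sub>0"
  obtain q where path: "(r\<^sub>0, q) \<in> dual_edges ^^ n" and adj: "adjacent H sig alp q r"
    using Suc.prems by auto
  obtain j where j: "\<bar>j\<bar> \<le> int n" "even j \<longleftrightarrow> (r\<^sub>0 \<in> S \<longleftrightarrow> q \<in> S)"
    and cong_j: "[l r\<^sub>0 = (if even j then 1 else -1) * l q + j * ?s] (mod m)"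
    using Suc.IH[OF path] by blast
  show ?case
  proof (cases "q = r")
    case True
    with j cong_j show ?thesis by (intro exI[of _ j]) auto
  next
    case False
    with adj assms(1) have colour: "q \<in> S \<longleftrightarrow> r \<notin> S" unfolding checkerboard_def by blast
    obtain x where x: "x \<in> H" "l q + l r = dart_push x"
      using adjacent_pattern_sum[OF adj False] .
    obtain \<epsilon> where \<epsilon>: "\<epsilon> = 1 \<or> \<epsilon> = -1" "[dart_push x = \<epsilon> * ?s] (mod m)"
      using dart_push_sign[OF assms(2) x(1)] .
    define \<sigma> :: int where "\<sigma> = (if even j then 1 else -1)"
    define j' where "j' = j + \<sigma> * \<epsilon>"
    have parity: "even j' \<longleftrightarrow> odd j" and sign: "(if even j' then 1 else -1) = - \<sigma>"
      using \<epsilon>(1) unfolding j'_def \<sigma>_def by auto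
    \<comment> \<open>\<open>l r\<^sub>0 \<equiv> \<sigma> l q + j s = \<sigma> (l q + l r) - \<sigma> l r + j s \<equiv> \<sigma> \<epsilon> s - \<sigma> l r + j s\<close>\<close>
    have "[\<sigma> * (l q + l r) = \<sigma> * (\<epsilon> * ?s)] (mod m)"
      using \<epsilon>(2) x(2) by (simp add: cong_scalar_left)
    then have "[\<sigma> * (l q + l r) + (- \<sigma> * l r + j * ?s) = \<sigma> * (\<epsilon> * ?s) + (- \<sigma> * l r + j * ?s)] (mod m)"
      by (rule cong_add) (rule cong_refl)
    then have "[l r\<^sub>0 = (- \<sigma>) * l r + j' * ?s] (mod m)"
      using cong_j unfolding \<sigma>_def[symmetric] j'_def
      by (simp add: algebra_simps) (metis cong_trans)
    moreover have "\<bar>j'\<bar> \<le> int (Suc n)" using j(1) \<epsilon>(1) unfolding j'_def \<sigma>_def by auto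
    ultimately show ?thesis using parity sign j(2) colour by (intro exI[of _ j']) auto
  qed
qed

end

theorem mainTheorem12:
  fixes H :: "'a set" and sig alp :: "'a \<Rightarrow> 'a" and k :: enat
    and a :: "'a set \<Rightarrow> 'a set \<Rightarrow> int" and l :: "'a set \<Rightarrow> int"
    and S :: "'a set set" and e r1 r2 :: "'a set"
  assumes "knot_diagram H sig alp"
    and "reduced H sig alp"
    and "k \<ge> 2"
    and "game_version H sig alp k a"
    and "null_pattern H sig alp k a l"
    and "e \<in> edges H alp"
    and "checkerboard H sig alp S"
    and "r1 \<in> regions H sig alp" and "r2 \<in> regions H sig alp"
    and "r1 \<in> S \<longleftrightarrow> r2 \<in> S"
  shows "\<exists>i::int. \<bar>2 * i\<bar> \<le> int (dual_dist H sig alp r1 r2) \<and>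
           [l r1 = l r2 + 2 * i * push_number sig alp l e] (mod zmod k)"
proof -
  interpret knot_map H sig alp using assms(1) by unfold_locales
  interpret vanishing_vertex_sums H sig alp "zmod k" l
    using null_pattern_vertex_sum[OF assms(2,4,5)] by unfold_locales
  obtain x where x: "x \<in> H" "e = {x, alp x}" using assms(6) unfolding edges_def by blast
  have "(r1, r2) \<in> dual_edges\<^sup>*" using regions_dual_connected[OF assms(8,9)] .
  then have "(r1, r2) \<in> dual_edges ^^ dual_dist H sig alp r1 r2"
    unfolding dual_dist_def by (meson LeastI rtrancl_power)
  then obtain j where j: "\<bar>j\<bar> \<le> int (dual_dist H sig alp r1 r2)" "even j"
    "[l r1 = (if even j then 1 else -1) * l r2 + j * dart_push x] (mod zmod k)"
    using pattern_along_dual_path[OF assms(7) x(1)] assms(10) by blast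
  then obtain i where "j = 2 * i" by (elim evenE)
  with j show ?thesis using push_number_edge[OF x(1)] x(2) by (intro exI[of _ i]) simp
qed

end
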